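(* Let $\mathcal{C}$ be a connected unicyclic graph (a connected graph with exactly one cycle) with $n$ vertices, whose unique cycle has odd length, and assume $q\geq 3$. Then $X=\mathbb{T}$ is the projective torus in $\mathbb{P}^{n-1}$, i.e. $X=\{[(x_1,\ldots,x_n)]\in\mathbb{P}^{n-1}: x_i\in K^*\text{ for all } i\}$.
   Context: Let $K=\mathbb{F}_q$ be a finite field. For a graph $\mathcal{C}$ on vertices $y_1,\ldots,y_n$ (simple, no loops) with edges $f_1,\ldots,f_s$, let $v_i=\sum_{y_j\in f_i}e_j\in\{0,1\}^n$ be the characteristic vector of $f_i$ and write $x^{v_i}=\prod_j x_j^{v_{ij}}$. The algebraic toric set is $X=\{[(x^{v_1},\ldots,x^{v_s})]\in\mathbb{P}^{s-1}: x\in (K^* )^n\}$. (A connected unicyclic graph on $n$ vertices has exactly $s=n$ edges.) *)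

theory Defs
  imports "HOL-Library.FuncSet"
begin

definition simple_graph :: "'v set \<Rightarrow> 'v set set \<Rightarrow> bool" where
  "simple_graph V E \<longleftrightarrow> finite V \<and> (\<forall>e\<in>E. e \<subseteq> V \<and> card e = 2)"

definition adj :: "'v set set \<Rightarrow> 'v \<Rightarrow> 'v \<Rightarrow> bool" where
  "adj E u v \<longleftrightarrow> {u, v} \<in> E"

definition connected_graph :: "'v set \<Rightarrow> 'v set set \<Rightarrow> bool" where
  "connected_graph V E \<longleftrightarrow> V \<noteq> {} \<and> (\<forall>u\<in>V. \<forall>v\<in>V. (adj E)\<^sup>*\<^sup>* u v)"

definition is_cycle :: "'v set set \<Rightarrow> 'v set set \<Rightarrow> bool" where
  "is_cycle E C \<longleftrightarrow> (\<exists>vs. length vs \<ge> 3 \<and> distinct vs \<and>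
      C = {{vs ! i, vs ! ((i + 1) mod length vs)} | i. i < length vs} \<and> C \<subseteq> E)"

definition cycle_length :: "'v set set \<Rightarrow> nat" where
  "cycle_length C = card C"

definition unicyclic :: "'v set \<Rightarrow> 'v set set \<Rightarrow> bool" where
  "unicyclic V E \<longleftrightarrow> connected_graph V E \<and> (\<exists>!C. is_cycle E C)"

text \<open>Points of projective space P(K^E): nonzero vectors K^E (functions vanishing off E)
  modulo nonzero scalars; a point is represented by its equivalence class.\<close>
definition proj_point :: "'e set \<Rightarrow> ('e \<Rightarrow> 'a::field) \<Rightarrow> ('e \<Rightarrow> 'a) set" where
  "proj_point E y = {restrict (\<lambda>e. c * y e) E | c. c \<noteq> 0}"

definition toric_set :: "'v set \<Rightarrow> 'v set set \<Rightarrow> ('v set \<Rightarrow> 'a::field) set set" where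
  "toric_set V E = {proj_point E (\<lambda>e. \<Prod>v\<in>e. x v) | x. \<forall>v\<in>V. x v \<noteq> 0}"

definition proj_torus :: "'e set \<Rightarrow> ('e \<Rightarrow> 'a::field) set set" where
  "proj_torus E = {proj_point E y | y. \<forall>e\<in>E. y e \<noteq> 0}"

end

theory Submission
  imports Defs "HOL-Library.Transitive_Closure_Table"
begin

(* The inclusion toric_set V E \<subseteq> proj_torus E is immediate: monomials
   in nonzero values are nonzero.  For the converse, let the unique cycle have odd
   length and remove one of its edges e0 = {r,p}; the rest F = E - {e0} is a forest.
   (1) On a forest every edge labelling y with nonzero values is realised exactly as
       y {a,b} = x a * x b by a nonzero vertex labelling x (induction over the edges:
       a new edge joins two different components, and rescaling the component of one
       endpoint alternately by l and 1/l along a 2-colouring fixes the new edge).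
   (2) A forest is 2-colourable, and since the cycle has odd length, the path
       p = v_0, ..., v_(k-1) = r in F has even length, so r and p get the same colour.
   (3) Multiplying x by a scalar beta on the colour class not containing p scales
       every F-edge by beta and the edge {r,p} by beta^2; choosing beta correctly makes
       all edges equal to beta * y, hence [y] is a point of the toric set. *)

section \<open>Graph-theoretic preliminaries\<close>

definition cycle_free :: "'v set set \<Rightarrow> bool" where
  "cycle_free F \<longleftrightarrow> \<not> (\<exists>C. is_cycle F C)"

definition two_coloring :: "'v set set \<Rightarrow> ('v \<Rightarrow> bool) \<Rightarrow> bool" where
  "two_coloring F \<sigma> \<longleftrightarrow> (\<forall>a b. {a, b} \<in> F \<longrightarrow> \<sigma> a \<noteq> \<sigma> b)"

definition component :: "'v set set \<Rightarrow> 'v \<Rightarrow> 'v set" where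
  "component F v = {w. (adj F)\<^sup>*\<^sup>* v w}"

lemma is_cycle_mono: "is_cycle F C \<Longrightarrow> F \<subseteq> G \<Longrightarrow> is_cycle G C"
  unfolding is_cycle_def by blast

lemma cycle_free_insertD: "cycle_free (insert e F) \<Longrightarrow> cycle_free F"
  unfolding cycle_free_def using is_cycle_mono by blast

lemma two_coloring_insertD: "two_coloring (insert e F) \<sigma> \<Longrightarrow> two_coloring F \<sigma>"
  unfolding two_coloring_def by blast

lemma card2E: "card e = 2 \<Longrightarrow> \<exists>a b. a \<noteq> b \<and> e = {a, b}"
  by (metis card_2_iff)

lemma component_edge_closed:
  assumes "{a, b} \<in> F"
  shows "a \<in> component F v \<longleftrightarrow> b \<in> component F v"
proof -
  have "adj F a b" "adj F b a" using assms by (auto simp: adj_def insert_commute)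
  thus ?thesis unfolding component_def
    by (metis mem_Collect_eq rtranclp.rtrancl_into_rtrancl)
qed

text \<open>A path from v to u together with a new edge {u,v} closes a cycle; we shorten
  the path to a simple one and read off the cycle.\<close>

lemma path_closes_cycle:
  assumes "(adj F)\<^sup>*\<^sup>* v u" "u \<noteq> v" "{u, v} \<notin> F"
  shows "\<exists>C. is_cycle (insert {u, v} F) C"
proof -
  obtain xs where "rtrancl_path (adj F) v xs u"
    using assms(1) rtranclp_eq_rtrancl_path by metis
  then obtain xs' where p: "rtrancl_path (adj F) v xs' u" and d: "distinct (v # xs')"
    using rtrancl_path_distinct by metis
  have ne: "xs' \<noteq> []"
    using p assms(2) by (auto elim: rtrancl_path.cases)
  have lst: "last xs' = u" using rtrancl_path_last[OF p ne] .
  have len: "length xs' \<ge> 2"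
  proof (rule ccontr)
    assume "\<not> length xs' \<ge> 2"
    moreover have "length xs' \<noteq> 0" using ne by simp
    ultimately have "length xs' = 1" by linarith
    then obtain w where w: "xs' = [w]" by (cases xs') auto
    with lst rtrancl_path_nth[OF p, of 0] have "adj F v u" by simp
    with assms(3) show False by (simp add: adj_def insert_commute)
  qed
  define vs where "vs = v # xs'"
  have "{vs ! i, vs ! ((i + 1) mod length vs)} \<in> insert {u, v} F" if i: "i < length vs" for i
  proof (cases "i < length xs'")
    case True
    hence "(i + 1) mod length vs = i + 1" by (simp add: vs_def)
    moreover have "adj F (vs ! i) (xs' ! i)"
      using rtrancl_path_nth[OF p True] by (simp add: vs_def)
    ultimately show ?thesis by (simp add: adj_def vs_def)
  next
    case False
    with i have "i = length xs'" by (simp add: vs_def)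
    moreover have "vs ! length xs' = u" using lst ne by (simp add: vs_def last_conv_nth)
    ultimately show ?thesis by (simp add: vs_def)
  qed
  moreover have "length vs \<ge> 3" "distinct vs" using len d by (simp_all add: vs_def)
  ultimately show ?thesis unfolding is_cycle_def by blast
qed

lemma new_edge_joins_components:
  assumes "cycle_free (insert {u, v} F)" "{u, v} \<notin> F" "u \<noteq> v"
  shows "u \<notin> component F v"
  using path_closes_cycle[of F v u] assms by (auto simp: component_def cycle_free_def)

text \<open>Every forest is 2-colourable: when adding an edge, flip the colours on the
  component of one endpoint if necessary.\<close>

lemma forest_two_colorable:
  assumes "finite F" "\<forall>e\<in>F. card e = 2" "cycle_free F"
  shows "\<exists>\<sigma>. two_coloring F \<sigma>"
  using assms
proof (induction F rule: finite_induct)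
  case empty
  then show ?case by (simp add: two_coloring_def)
next
  case (insert e F)
  obtain \<sigma> where \<sigma>: "two_coloring F \<sigma>"
    using insert.IH insert.prems cycle_free_insertD by auto
  obtain u v where uv: "u \<noteq> v" "e = {u, v}" using card2E insert.prems(1) by blast
  have uC: "u \<notin> component F v"
    using new_edge_joins_components[of u v F] insert.hyps(2) insert.prems(2) uv by simp
  define \<sigma>' where
    "\<sigma>' w = (if w \<in> component F v \<and> \<sigma> u = \<sigma> v then \<not> \<sigma> w else \<sigma> w)" for w
  have "\<sigma>' a \<noteq> \<sigma>' b" if "{a, b} \<in> insert e F" for a b
  proof (cases "{a, b} = e")
    case True
    then have "(a = u \<and> b = v) \<or> (a = v \<and> b = u)" using uv by (simp add: doubleton_eq_iff)
    then show ?thesis using uC by (auto simp: \<sigma>'_def component_def)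
  next
    case False
    then have "{a, b} \<in> F" using that by simp
    then show ?thesis
      using component_edge_closed[of a b F v] \<sigma> by (auto simp: \<sigma>'_def two_coloring_def)
  qed
  then show ?case unfolding two_coloring_def by blast
qed

section \<open>Cycles\<close>

lemma cycle_card:
  assumes "length vs \<ge> 3" "distinct vs"
  shows "card {{vs ! i, vs ! ((i + 1) mod length vs)} | i. i < length vs} = length vs"
proof -
  let ?k = "length vs"
  let ?f = "\<lambda>i. {vs ! i, vs ! ((i + 1) mod ?k)}"
  have eq: "{{vs ! i, vs ! ((i + 1) mod length vs)} | i. i < length vs} = ?f ` {..<?k}"
    by auto
  have "i = j" if i: "i < ?k" and j: "j < ?k" and fij: "?f i = ?f j" for i j
  proof -
    have idx: "vs ! a = vs ! b \<longleftrightarrow> a = b" if "a < ?k" "b < ?k" for a b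
      using nth_eq_iff_index_eq[OF assms(2)] that .
    have "0 < ?k" using assms(1) by linarith
    then have mods: "(i + 1) mod ?k < ?k" "(j + 1) mod ?k < ?k" by simp_all
    from fij consider
        "vs ! i = vs ! j"
      | "vs ! i = vs ! ((j + 1) mod ?k)" "vs ! ((i + 1) mod ?k) = vs ! j"
      by (auto simp: doubleton_eq_iff)
    then show "i = j"
    proof cases
      case 1
      then show ?thesis using idx i j by simp
    next
      case 2
      then have a: "i = (j + 1) mod ?k" and b: "(i + 1) mod ?k = j"
        using idx i j mods by simp_all
      show ?thesis
      proof (cases "j + 1 < ?k")
        case True
        then show ?thesis using a b j assms(1)
          by (cases "j + 2 < ?k") (auto simp: mod_if split: if_splits)
      next
        case False
        then have "j + 1 = ?k" using j by simp
        then show ?thesis using a b assms(1) by simp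
      qed
    qed
  qed
  then have "inj_on ?f {..<?k}" by (intro inj_onI) auto
  then show ?thesis unfolding eq by (simp add: card_image)
qed

lemma path_colors_alternate:
  assumes "two_coloring F \<sigma>"
    and "\<forall>i. i + 1 < length vs \<longrightarrow> {vs ! i, vs ! (i + 1)} \<in> F"
    and "i < length vs"
  shows "\<sigma> (vs ! i) = (\<sigma> (vs ! 0) = even i)"
  using assms(3)
proof (induction i)
  case 0
  then show ?case by simp
next
  case (Suc i)
  then have "\<sigma> (vs ! i) \<noteq> \<sigma> (vs ! Suc i)"
    using assms(1,2) by (auto simp: two_coloring_def)
  then show ?case using Suc by auto
qed

lemma remove_edge_of_unique_cycle:
  assumes "is_cycle E C0" "\<forall>C. is_cycle E C \<longrightarrow> C = C0" "e \<in> C0"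
  shows "cycle_free (E - {e})"
  unfolding cycle_free_def
proof
  assume "\<exists>C. is_cycle (E - {e}) C"
  then obtain C where C: "is_cycle (E - {e}) C" ..
  then have "C = C0" using assms(2) is_cycle_mono[OF C] by auto
  moreover have "C \<subseteq> E - {e}" using C unfolding is_cycle_def by blast
  ultimately show False using assms(3) by auto
qed

lemma path_edge_not_closing_edge:
  assumes "distinct vs" "length vs \<ge> 3" "i + 1 < length vs"
  shows "{vs ! i, vs ! (i + 1)} \<noteq> {vs ! (length vs - 1), vs ! 0}"
proof
  assume edge: "{vs ! i, vs ! (i + 1)} = {vs ! (length vs - 1), vs ! 0}"
  have idx: "vs ! a = vs ! b \<longleftrightarrow> a = b" if "a < length vs" "b < length vs" for a b
    using nth_eq_iff_index_eq[OF assms(1)] that .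
  have bounds: "0 < length vs" "length vs - 1 < length vs" using assms(2) by linarith+
  have "i + 1 = length vs - 1"
    using edge idx[of "i + 1" 0] idx[of "i + 1" "length vs - 1"] assms(3) bounds
    by (auto simp: doubleton_eq_iff)
  moreover have "i = 0"
    using edge idx[of i 0] idx[of i "length vs - 1"] assms(3) bounds \<open>i + 1 = length vs - 1\<close>
    by (auto simp: doubleton_eq_iff)
  ultimately show False using assms(2) by simp
qed

text \<open>If all cycles are odd and there is only one, removing an edge {r,p} of it
  leaves a forest in which r and p have the same colour under every 2-colouring:
  they are joined by the rest of the cycle, a path with an even number of edges.\<close>

lemma odd_unicyclic_split:
  assumes "unicyclic V E" "\<forall>C. is_cycle E C \<longrightarrow> odd (cycle_length C)"
  obtains r p where "{r, p} \<in> E" "r \<noteq> p" "cycle_free (E - {{r, p}})"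
    and "\<And>\<sigma>. two_coloring (E - {{r, p}}) \<sigma> \<Longrightarrow> \<sigma> r = \<sigma> p"
proof -
  obtain C0 where c0: "is_cycle E C0" and uniq: "\<forall>C. is_cycle E C \<longrightarrow> C = C0"
    using assms(1) unfolding unicyclic_def by metis
  then obtain vs where vs3: "length vs \<ge> 3" and dvs: "distinct vs"
    and C0: "C0 = {{vs ! i, vs ! ((i + 1) mod length vs)} | i. i < length vs}"
    and C0E: "C0 \<subseteq> E"
    unfolding is_cycle_def by blast
  define k where "k = length vs"
  have oddk: "odd k"
    using assms(2) c0 cycle_card[OF vs3 dvs] C0 unfolding cycle_length_def k_def by metis
  define p where "p = vs ! 0"
  define r where "r = vs ! (k - 1)"
  have "k - 1 + 1 = length vs" using vs3 by (simp add: k_def)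
  then have k1: "k - 1 < length vs" "(k - 1 + 1) mod length vs = 0" by simp_all
  have "{vs ! (k - 1), vs ! ((k - 1 + 1) mod length vs)} \<in> C0"
    unfolding C0 using k1(1) by blast
  then have e0C: "{r, p} \<in> C0" using k1(2) by (simp add: r_def p_def)
  have "0 < length vs" "k - 1 \<noteq> 0" using vs3 unfolding k_def by linarith+
  then have rp: "r \<noteq> p" using nth_eq_iff_index_eq[OF dvs k1(1), of 0] by (simp add: r_def p_def)
  define F where "F = E - {{r, p}}"
  have "cycle_free F" using remove_edge_of_unique_cycle[OF c0 uniq e0C] by (simp add: F_def)
  moreover have "\<sigma> r = \<sigma> p" if \<sigma>: "two_coloring F \<sigma>" for \<sigma>
  proof -
    have "{vs ! i, vs ! (i + 1)} \<in> F" if i: "i + 1 < length vs" for i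
    proof -
      have "{vs ! i, vs ! (i + 1)} \<in> C0" unfolding C0 using i by force
      moreover have "{vs ! i, vs ! (i + 1)} \<noteq> {r, p}"
        using path_edge_not_closing_edge[OF dvs vs3 i] by (simp add: r_def p_def k_def)
      ultimately show ?thesis using C0E by (auto simp: F_def)
    qed
    then show ?thesis
      using path_colors_alternate[OF \<sigma>, of vs "k - 1"] oddk vs3
      by (simp add: r_def p_def k_def)
  qed
  ultimately show ?thesis using that e0C C0E rp by (auto simp: F_def)
qed

section \<open>Edge labellings realised by vertex labellings\<close>

text \<open>The 2-colouring sigma serves to rescale a component by l on one
  colour class and by 1/l on the other, which leaves its edge products unchanged.\<close>

lemma forest_edge_products_onto:
  fixes F :: "'v set set" and y :: "'v set \<Rightarrow> 'a::field"
  assumes "finite F" "\<forall>e\<in>F. card e = 2" "cycle_free F" "two_coloring F \<sigma>"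
    and "\<forall>e\<in>F. y e \<noteq> 0"
  shows "\<exists>x. (\<forall>w. x w \<noteq> 0) \<and> (\<forall>a b. {a, b} \<in> F \<longrightarrow> x a * x b = y {a, b})"
  using assms
proof (induction F rule: finite_induct)
  case empty
  then show ?case by (auto intro: exI[of _ "\<lambda>_. 1"])
next
  case (insert e F)
  have "cycle_free F" "two_coloring F \<sigma>"
    using insert.prems(2,3) cycle_free_insertD two_coloring_insertD by blast+
  moreover have "\<forall>e\<in>F. card e = 2" "\<forall>e\<in>F. y e \<noteq> 0" using insert.prems(1,4) by simp_all
  ultimately obtain x where x0: "\<forall>w. x w \<noteq> 0"
    and xs: "\<forall>a b. {a, b} \<in> F \<longrightarrow> x a * x b = y {a, b}"
    using insert.IH by blast
  obtain u v where uv: "u \<noteq> v" "e = {u, v}" using card2E insert.prems(1) by blast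
  have uC: "u \<notin> component F v"
    using new_edge_joins_components[of u v F] insert.hyps(2) insert.prems(2) uv by simp
  define l where "l = y e / (x u * x v)"
  have l0: "l \<noteq> 0" using insert.prems(4) x0 by (simp add: l_def)
  define x' where "x' w = x w * (if w \<in> component F v
      then (if \<sigma> w = \<sigma> v then l else inverse l) else 1)" for w
  have "x' a * x' b = y {a, b}" if ab: "{a, b} \<in> insert e F" for a b
  proof (cases "{a, b} = e")
    case True
    then have "(a = u \<and> b = v) \<or> (a = v \<and> b = u)" using uv by (simp add: doubleton_eq_iff)
    then show ?thesis using uC x0 uv True
      by (auto simp: x'_def l_def field_simps component_def)
  next
    case False
    then have F: "{a, b} \<in> F" using ab by simp
    then have "\<sigma> a \<noteq> \<sigma> b" using insert.prems(3) by (auto simp: two_coloring_def)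
    then show ?thesis using component_edge_closed[OF F, of v] xs F l0
      by (auto simp: x'_def field_simps)
  qed
  moreover have "\<forall>w. x' w \<noteq> 0" using x0 l0 by (simp add: x'_def)
  ultimately show ?case by blast
qed

text \<open>Adding an edge {r,p} whose endpoints have the same colour: rescaling the colour
  class not containing p by a suitable beta realises y up to the common factor beta.\<close>

lemma forest_plus_edge_products_onto:
  fixes y :: "'v set \<Rightarrow> 'a::field"
  assumes "finite F" "\<forall>e\<in>F. card e = 2" "cycle_free F" "two_coloring F \<sigma>"
    and "\<sigma> r = \<sigma> p" "r \<noteq> p" "\<forall>e\<in>insert {r, p} F. y e \<noteq> 0"
  shows "\<exists>x \<beta>. (\<forall>w. x w \<noteq> 0) \<and> \<beta> \<noteq> 0 \<and> (\<forall>e\<in>insert {r, p} F. (\<Prod>v\<in>e. x v) = \<beta> * y e)"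
proof -
  obtain x where x0: "\<forall>w. x w \<noteq> 0" and xs: "\<forall>a b. {a, b} \<in> F \<longrightarrow> x a * x b = y {a, b}"
    using forest_edge_products_onto[OF assms(1-4), of y] assms(7) by auto
  define \<beta> where "\<beta> = x p * x r / y {r, p}"
  have \<beta>0: "\<beta> \<noteq> 0" using x0 assms(7) by (simp add: \<beta>_def)
  define x' where "x' w = x w * (if \<sigma> w = \<sigma> p then 1 else \<beta>)" for w
  have "(\<Prod>v\<in>e. x' v) = \<beta> * y e" if e: "e \<in> insert {r, p} F" for e
  proof (cases "e = {r, p}")
    case True
    have "(\<Prod>v\<in>{r, p}. x' v) = x r * x p" using assms(5,6) by (simp add: x'_def)
    also have "\<dots> = \<beta> * y {r, p}" using assms(7) by (simp add: \<beta>_def)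
    finally show ?thesis using True by simp
  next
    case False
    with e have eF: "e \<in> F" by simp
    then obtain a b where ab: "a \<noteq> b" "e = {a, b}" using assms(2) card2E by blast
    then have "\<sigma> a \<noteq> \<sigma> b" using assms(4) eF by (auto simp: two_coloring_def)
    then show ?thesis using ab eF xs by (auto simp: x'_def)
  qed
  moreover have "\<forall>w. x' w \<noteq> 0" using x0 \<beta>0 by (simp add: x'_def)
  ultimately show ?thesis using \<beta>0 by blast
qed

section \<open>Projective points\<close>

lemma proj_point_scale:
  assumes "\<forall>e\<in>E. z e = b * y e" "b \<noteq> 0"
  shows "proj_point E z = proj_point E (y :: 'e \<Rightarrow> 'a::field)"
proof -
  have "restrict (\<lambda>e. c * z e) E = restrict (\<lambda>e. (c * b) * y e) E" for c
    using assms(1) by (auto simp: restrict_def)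
  moreover have "restrict (\<lambda>e. c * y e) E = restrict (\<lambda>e. (c / b) * z e) E" for c
    using assms by (auto simp: restrict_def)
  ultimately show ?thesis unfolding proj_point_def using assms(2)
    by (auto, metis mult_eq_0_iff, metis divide_eq_0_iff)
qed

lemma toric_set_subset_torus:
  assumes "simple_graph V E"
  shows "toric_set V E \<subseteq> (proj_torus E :: ('v set \<Rightarrow> 'a::field) set set)"
proof
  fix P :: "('v set \<Rightarrow> 'a) set" assume "P \<in> toric_set V E"
  then obtain x :: "'v \<Rightarrow> 'a" where P: "P = proj_point E (\<lambda>e. \<Prod>v\<in>e. x v)"
    and x: "\<forall>v\<in>V. x v \<noteq> 0"
    unfolding toric_set_def by blast
  have "(\<Prod>v\<in>e. x v) \<noteq> 0" if "e \<in> E" for e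
  proof -
    have "e \<subseteq> V" "finite e" using assms that by (auto simp: simple_graph_def intro: card_ge_0_finite)
    thus ?thesis using x by (auto simp: prod_zero_iff)
  qed
  thus "P \<in> proj_torus E" unfolding proj_torus_def P by blast
qed

theorem corollary3p10:
  fixes V :: "'v set" and E :: "'v set set"
  assumes "card (UNIV :: 'a::{finite,field} set) \<ge> 3"
    and "simple_graph V E"
    and "unicyclic V E"
    and "\<forall>C. is_cycle E C \<longrightarrow> odd (cycle_length C)"
  shows "(toric_set V E :: ('v set \<Rightarrow> 'a::{finite,field}) set set) = proj_torus E"
proof
  show "toric_set V E \<subseteq> proj_torus E" using toric_set_subset_torus[OF assms(2)] .
  obtain r p where rpE: "{r, p} \<in> E" and rp: "r \<noteq> p" and forest: "cycle_free (E - {{r, p}})"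
    and same: "\<And>\<sigma>. two_coloring (E - {{r, p}}) \<sigma> \<Longrightarrow> \<sigma> r = \<sigma> p"
    using odd_unicyclic_split[OF assms(3,4)] by blast
  define F where "F = E - {{r, p}}"
  have EF: "E = insert {r, p} F" using rpE by (auto simp: F_def)
  have "finite E" "\<forall>e\<in>E. card e = 2"
    using assms(2) by (auto simp: simple_graph_def intro: finite_subset[of E "Pow V"])
  then have fF: "finite F" "\<forall>e\<in>F. card e = 2" by (auto simp: F_def)
  obtain \<sigma> where \<sigma>: "two_coloring F \<sigma>"
    using forest_two_colorable[OF fF] forest by (auto simp: F_def)
  note onto = forest_plus_edge_products_onto[OF fF forest[folded F_def] \<sigma> same[folded F_def, OF \<sigma>] rp]
  show "proj_torus E \<subseteq> (toric_set V E :: ('v set \<Rightarrow> 'a) set set)"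
  proof
    fix P :: "('v set \<Rightarrow> 'a) set" assume "P \<in> proj_torus E"
    then obtain y where P: "P = proj_point E y" and y: "\<forall>e\<in>E. y e \<noteq> 0"
      unfolding proj_torus_def by blast
    obtain x \<beta> where x0: "\<forall>w. x w \<noteq> (0::'a)" and "\<beta> \<noteq> 0"
      and "\<forall>e\<in>E. (\<Prod>v\<in>e. x v) = \<beta> * y e"
      using onto[of y] y unfolding EF by blast
    then have "P = proj_point E (\<lambda>e. \<Prod>v\<in>e. x v)"
      using proj_point_scale[of E "\<lambda>e. \<Prod>v\<in>e. x v" \<beta> y] P by simp
    then show "P \<in> toric_set V E" unfolding toric_set_def using x0 by blast
  qed
qed

end
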